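(* Let $m,n\ge 3$ and let $v$ be any vertex of $\mathcal{C}^3_{m,n}$. Then, with $\mathcal{C}^3_{m,n}-v$ denoting the strong deletion of $v$, \[ \mathcal{E_S}(\mathcal{C}^3_{m,n})>\mathcal{E_S}(\mathcal{C}^3_{m,n}-v). \]
   Context: For a hypergraph $\mathcal{H}$ and distinct vertices $i,j$, the co-degree $c_{ij}$ is the number of hyperedges containing both $i$ and $j$. The Seidel matrix $\mathcal{S}(\mathcal{H})$ has zero diagonal and $(i,j)$-entry $1-2c_{ij}$ for $i\neq j$; the Seidel energy $\mathcal{E_S}(\mathcal{H})$ is the sum of the absolute values of its eigenvalues. The complete $3$-uniform bipartite hypergraph $\mathcal{C}^3_{m,n}$ has vertex set $V_1\sqcup V_2$, $|V_1|=m$, $|V_2|=n$, and hyperedge set all $3$-subsets meeting both $V_1$ and $V_2$. The strong deletion $\mathcal{H}-v$ of a vertex $v$ is the hypergraph with vertex set $V(\mathcal{H})\setminus\{v\}$ and hyperedge set $\{e\in E(\mathcal{H}): v\notin e\}$. *)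

theory Defs
  imports "Jordan_Normal_Form.Char_Poly"
begin

type_synonym hypergraph = "nat set \<times> nat set set"

definition hverts :: "hypergraph \<Rightarrow> nat set" where "hverts H = fst H"
definition hedges :: "hypergraph \<Rightarrow> nat set set" where "hedges H = snd H"

definition codegree :: "hypergraph \<Rightarrow> nat \<Rightarrow> nat \<Rightarrow> nat" where
  "codegree H i j = card {e \<in> hedges H. i \<in> e \<and> j \<in> e}"

definition seidel_matrix :: "hypergraph \<Rightarrow> real mat" where
  "seidel_matrix H =
     (let vs = sorted_list_of_set (hverts H); N = length vs in
      mat N N (\<lambda>(i,j). if i = j then 0
                        else 1 - 2 * real (codegree H (vs ! i) (vs ! j))))"

text \<open>The Seidel matrix is real symmetric, so all eigenvalues are real.\<close>
definition seidel_energy :: "hypergraph \<Rightarrow> real" where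
  "seidel_energy H =
     (let p = char_poly (seidel_matrix H) in
      (\<Sum>r \<in> {x. poly p x = 0}. \<bar>r\<bar> * real (order r p)))"

text \<open>Complete 3-uniform bipartite hypergraph C^3_{m,n}:
  V1 = {0..<m}, V2 = {m..<m+n}.\<close>
definition complete_bip3 :: "nat \<Rightarrow> nat \<Rightarrow> hypergraph" where
  "complete_bip3 m n =
     ({0..<m+n},
      {e. e \<subseteq> {0..<m+n} \<and> card e = 3 \<and> e \<inter> {0..<m} \<noteq> {} \<and> e \<inter> {m..<m+n} \<noteq> {}})"

definition strong_delete :: "hypergraph \<Rightarrow> nat \<Rightarrow> hypergraph" where
  "strong_delete H v = (hverts H - {v}, {e \<in> hedges H. v \<notin> e})"

end

theory Submission
  imports Defs
begin

text \<open>The Seidel matrix of \<open>C\<^sup>3(m, n)\<close> has zero diagonal and is constant on the blocks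
  \<open>V\<^sub>1 \<times> V\<^sub>1\<close>, \<open>V\<^sub>2 \<times> V\<^sub>2\<close> and \<open>V\<^sub>1 \<times> V\<^sub>2\<close>, with entries \<open>a = 1 - 2n\<close>, \<open>b = 1 - 2m\<close> and
  \<open>c = 1 - 2(m + n - 2)\<close>. Such a matrix has the eigenvalues \<open>-a\<close> and \<open>-b\<close> with multiplicities
  \<open>m - 1\<close> and \<open>n - 1\<close>, and the two roots of \<open>(t - (m - 1) a) (t - (n - 1) b) = c\<^sup>2 m n\<close>, which
  here have opposite signs. Hence the Seidel energy of \<open>C\<^sup>3(m, n)\<close> is
  \<open>(m - 1)(2n - 1) + (n - 1)(2m - 1) + sqrt ((m - n)\<^sup>2 + 4mn(2m + 2n - 5)\<^sup>2)\<close>.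
  Strongly deleting a vertex of \<open>V\<^sub>1\<close> (of \<open>V\<^sub>2\<close>) leaves, after an order-preserving relabelling
  of the vertices, \<open>C\<^sup>3(m - 1, n)\<close> (\<open>C\<^sup>3(m, n - 1)\<close>), and the closed form is strictly increasing in
  each argument.\<close>

section \<open>Sums of absolute values of roots\<close>

definition abs_root_sum :: "real poly \<Rightarrow> real" where
  "abs_root_sum p = (\<Sum>r \<in> {x. poly p x = 0}. \<bar>r\<bar> * real (order r p))"

lemma seidel_energy_eq_abs_root_sum: "seidel_energy H = abs_root_sum (char_poly (seidel_matrix H))"
  unfolding seidel_energy_def abs_root_sum_def Let_def ..

lemma order_prod_linear_factors: "order x (\<Prod>r\<leftarrow>rs. [:-r, 1:]) = count_list rs (x :: real)"
proof (induction rs)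
  case (Cons r rs)
  have "(\<Prod>r\<leftarrow>r # rs. [:-r, 1:]) \<noteq> 0" unfolding prod_list_zero_iff by auto
  then have "order x ([:-r, 1:] * (\<Prod>r\<leftarrow>rs. [:-r, 1:])) =
      order x [:-r, 1:] + order x (\<Prod>r\<leftarrow>rs. [:-r, 1:])"
    by (intro order_mult) simp
  then show ?case using Cons.IH by (simp add: order_linear')
qed (simp add: order_0I)

lemma sum_list_map_eq_sum_of_nat_count:
  fixes f :: "'a \<Rightarrow> 'b :: comm_semiring_1"
  assumes "set xs \<subseteq> X" "finite X"
  shows "(\<Sum>x\<leftarrow>xs. f x) = (\<Sum>x\<in>X. of_nat (count_list xs x) * f x)"
  using assms(1)
proof (induction xs)
  case (Cons a xs)
  have "(\<Sum>x\<in>X. of_nat (count_list (a # xs) x) * f x) =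
      (\<Sum>x\<in>X. of_nat (count_list xs x) * f x) + (\<Sum>x\<in>X. if a = x then f x else 0)"
    by (auto simp: sum.distrib[symmetric] distrib_right add.commute intro!: sum.cong)
  also have "(\<Sum>x\<in>X. if a = x then f x else 0) = f a"
    using Cons.prems assms(2) by simp
  finally show ?case using Cons by (simp add: add.commute)
qed simp

lemma abs_root_sum_prod_linear_factors: "abs_root_sum (\<Prod>r\<leftarrow>rs. [:-r, 1:]) = (\<Sum>r\<leftarrow>rs. \<bar>r\<bar>)"
proof -
  have "{x. poly (\<Prod>r\<leftarrow>rs. [:-r, 1:]) x = 0} = set rs"
    by (induction rs) auto
  then show ?thesis
    unfolding abs_root_sum_def order_prod_linear_factors
    by (simp add: sum_list_map_eq_sum_of_nat_count[of rs "set rs"] mult.commute)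
qed

section \<open>Two-class matrices\<close>

lemma sum_all_but_one:
  assumes "i \<in> K" "finite K"
  shows "(\<Sum>k\<in>K. if i = k then 0 else a) = (real (card K) - 1) * (a :: real)"
proof -
  have "(\<Sum>k\<in>K. if i = k then 0 else a) = (\<Sum>k\<in>K. a - (if i = k then a else 0))"
    by (rule sum.cong) auto
  then show ?thesis using assms by (simp add: sum_subtractf algebra_simps)
qed

lemma sum_mult_delta_diff:
  assumes "j \<in> K" "z \<in> K" "j \<noteq> z" "finite K"
  shows "(\<Sum>k\<in>K. f k * (if k = j then 1 else if k = z then -1 else 0)) = f j - (f z :: real)"
proof -
  have "(\<Sum>k\<in>K. f k * (if k = j then 1 else if k = z then -1 else 0)) =
      (\<Sum>k\<in>K. (if k = j then f k else 0) - (if k = z then f k else 0))"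
    by (rule sum.cong) (use assms in auto)
  then show ?thesis using assms by (simp add: sum_subtractf)
qed

lemma sum_const_plus_cancelling:
  assumes "z \<in> K" "finite K"
  shows "(\<Sum>i\<in>K. g + (if i = z then - (\<Sum>j\<in>K - {z}. w j) else w i)) = real (card K) * (g :: real)"
proof -
  have "(\<Sum>i\<in>K. if i = z then - (\<Sum>j\<in>K - {z}. w j) else w i) = 0"
    using assms by (simp add: sum.remove[of K z] sum.If_cases Diff_eq Int_commute)
  then show ?thesis by (simp add: sum.distrib)
qed

definition two_class_entry :: "nat \<Rightarrow> real \<Rightarrow> real \<Rightarrow> real \<Rightarrow> nat \<Rightarrow> nat \<Rightarrow> real" where
  "two_class_entry p a b c i j =
     (if i = j then 0 else if i < p \<and> j < p then a else if p \<le> i \<and> p \<le> j then b else c)"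

definition two_class_mat :: "nat \<Rightarrow> nat \<Rightarrow> real \<Rightarrow> real \<Rightarrow> real \<Rightarrow> real mat" where
  "two_class_mat p q a b c = mat (p + q) (p + q) (\<lambda>(i, j). two_class_entry p a b c i j)"

definition two_class_quadratic :: "nat \<Rightarrow> nat \<Rightarrow> real \<Rightarrow> real \<Rightarrow> real \<Rightarrow> real \<Rightarrow> real" where
  "two_class_quadratic p q a b c t =
     (t - (real p - 1) * a) * (t - (real q - 1) * b) - c\<^sup>2 * real p * real q"

text \<open>Columns \<open>0\<close> and \<open>p\<close> are eigenvectors taking the value \<open>u = c q\<close> on the first class and
  \<open>v = t - (p - 1) a\<close> on the second, for the two roots \<open>t\<close> of \<open>two_class_quadratic\<close>. The other
  columns, \<open>e\<^sub>j - e\<^sub>0\<close> for \<open>j < p\<close> and \<open>e\<^sub>j - e\<^sub>p\<close> for \<open>j > p\<close>, are eigenvectors for \<open>-a\<close> and \<open>-b\<close>.\<close>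
definition two_class_eigvec_entry :: "nat \<Rightarrow> real \<Rightarrow> real \<Rightarrow> real \<Rightarrow> nat \<Rightarrow> nat \<Rightarrow> real" where
  "two_class_eigvec_entry p u v1 v2 i j =
     (if j = 0 then (if i < p then u else v1)
      else if j = p then (if i < p then u else v2)
      else if j < p then (if i = j then 1 else if i = 0 then -1 else 0)
      else (if i = j then 1 else if i = p then -1 else 0))"

definition two_class_eigvec_mat :: "nat \<Rightarrow> nat \<Rightarrow> real \<Rightarrow> real \<Rightarrow> real \<Rightarrow> real mat" where
  "two_class_eigvec_mat p q u v1 v2 =
     mat (p + q) (p + q) (\<lambda>(i, j). two_class_eigvec_entry p u v1 v2 i j)"

definition two_class_eigvals :: "nat \<Rightarrow> real \<Rightarrow> real \<Rightarrow> real \<Rightarrow> real \<Rightarrow> nat \<Rightarrow> real" where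
  "two_class_eigvals p a b t1 t2 j =
     (if j = 0 then t1 else if j = p then t2 else if j < p then -a else -b)"

lemma sum_two_class_entry_first_class:
  "(\<Sum>k\<in>{0..<p}. two_class_entry p a b c i k) = (if i < p then (real p - 1) * a else real p * c)"
proof (cases "i < p")
  case True
  then have "(\<Sum>k\<in>{0..<p}. two_class_entry p a b c i k) = (\<Sum>k\<in>{0..<p}. if i = k then 0 else a)"
    by (intro sum.cong) (auto simp: two_class_entry_def)
  then show ?thesis using True by (simp add: sum_all_but_one)
qed (auto simp: two_class_entry_def)

lemma sum_two_class_entry_second_class:
  assumes "i < p + q"
  shows "(\<Sum>k\<in>{p..<p+q}. two_class_entry p a b c i k) = (if i < p then real q * c else (real q - 1) * b)"
proof (cases "i < p")
  case False
  then have "(\<Sum>k\<in>{p..<p+q}. two_class_entry p a b c i k) = (\<Sum>k\<in>{p..<p+q}. if i = k then 0 else b)"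
    by (intro sum.cong) (auto simp: two_class_entry_def)
  then show ?thesis using False assms by (simp add: sum_all_but_one)
qed (auto simp: two_class_entry_def)

lemma two_class_mat_mult_class_constant:
  assumes "i < p + q" and t: "two_class_quadratic p q a b c t = 0"
  shows "(\<Sum>k\<in>{0..<p+q}. two_class_entry p a b c i k * (if k < p then c * real q else t - (real p - 1) * a))
    = (if i < p then c * real q else t - (real p - 1) * a) * t"
proof -
  have "(\<Sum>k\<in>{0..<p+q}. two_class_entry p a b c i k * (if k < p then c * real q else t - (real p - 1) * a))
      = (\<Sum>k\<in>{0..<p}. two_class_entry p a b c i k) * (c * real q)
        + (\<Sum>k\<in>{p..<p+q}. two_class_entry p a b c i k) * (t - (real p - 1) * a)"
    by (simp add: sum.atLeastLessThan_concat[of 0 p "p + q", symmetric] sum_distrib_right)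
  also have "\<dots> = (if i < p then c * real q else t - (real p - 1) * a) * t"
    using t unfolding sum_two_class_entry_first_class sum_two_class_entry_second_class[OF assms(1)]
    by (auto simp: two_class_quadratic_def power2_eq_square algebra_simps)
  finally show ?thesis .
qed

lemma two_class_mat_mult_eigvec_entry:
  assumes p: "p \<ge> 1" and i: "i < p + q" and j: "j < p + q"
    and t1: "two_class_quadratic p q a b c t1 = 0" and t2: "two_class_quadratic p q a b c t2 = 0"
  defines "P \<equiv> two_class_eigvec_entry p (c * real q) (t1 - (real p - 1) * a) (t2 - (real p - 1) * a)"
  shows "(\<Sum>k\<in>{0..<p+q}. two_class_entry p a b c i k * P k j) = P i j * two_class_eigvals p a b t1 t2 j"
proof -
  consider "j = 0" | "j = p" | "0 < j" "j < p" | "p < j" using p by linarith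
  then show ?thesis
  proof cases
    case 1
    then have "(\<Sum>k\<in>{0..<p+q}. two_class_entry p a b c i k * P k j) =
        (\<Sum>k\<in>{0..<p+q}. two_class_entry p a b c i k * (if k < p then c * real q else t1 - (real p - 1) * a))"
      by (simp add: P_def two_class_eigvec_entry_def)
    then show ?thesis
      using 1 two_class_mat_mult_class_constant[OF i t1]
      by (simp add: P_def two_class_eigvec_entry_def two_class_eigvals_def)
  next
    case 2
    then have "(\<Sum>k\<in>{0..<p+q}. two_class_entry p a b c i k * P k j) =
        (\<Sum>k\<in>{0..<p+q}. two_class_entry p a b c i k * (if k < p then c * real q else t2 - (real p - 1) * a))"
      using p by (simp add: P_def two_class_eigvec_entry_def)
    then show ?thesis
      using 2 p two_class_mat_mult_class_constant[OF i t2]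
      by (simp add: P_def two_class_eigvec_entry_def two_class_eigvals_def)
  next
    case 3
    then have "(\<Sum>k\<in>{0..<p+q}. two_class_entry p a b c i k * P k j) =
        (\<Sum>k\<in>{0..<p+q}. two_class_entry p a b c i k * (if k = j then 1 else if k = 0 then -1 else 0))"
      by (intro sum.cong) (auto simp: P_def two_class_eigvec_entry_def)
    also have "\<dots> = two_class_entry p a b c i j - two_class_entry p a b c i 0"
      using 3 j by (intro sum_mult_delta_diff) auto
    finally show ?thesis
      using 3 by (auto simp: P_def two_class_eigvec_entry_def two_class_eigvals_def two_class_entry_def)
  next
    case 4
    then have "(\<Sum>k\<in>{0..<p+q}. two_class_entry p a b c i k * P k j) =
        (\<Sum>k\<in>{0..<p+q}. two_class_entry p a b c i k * (if k = j then 1 else if k = p then -1 else 0))"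
      by (intro sum.cong) (auto simp: P_def two_class_eigvec_entry_def)
    also have "\<dots> = two_class_entry p a b c i j - two_class_entry p a b c i p"
      using 4 j by (intro sum_mult_delta_diff) auto
    finally show ?thesis
      using 4 by (auto simp: P_def two_class_eigvec_entry_def two_class_eigvals_def two_class_entry_def)
  qed
qed

lemma two_class_mat_eigvecs:
  assumes "p \<ge> 1"
    and "two_class_quadratic p q a b c t1 = 0" "two_class_quadratic p q a b c t2 = 0"
  defines "P \<equiv> two_class_eigvec_mat p q (c * real q) (t1 - (real p - 1) * a) (t2 - (real p - 1) * a)"
  shows "two_class_mat p q a b c * P = P * mat_diag (p + q) (two_class_eigvals p a b t1 t2)"
proof -
  have "P \<in> carrier_mat (p + q) (p + q)" by (simp add: P_def two_class_eigvec_mat_def)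
  then show ?thesis
    unfolding mat_diag_mult_right[OF \<open>P \<in> _\<close>]
    by (intro eq_matI)
      (simp_all add: two_class_mat_def P_def two_class_eigvec_mat_def scalar_prod_def
        two_class_mat_mult_eigvec_entry[OF assms(1) _ _ assms(2,3)])
qed

lemma sum_two_class_eigvec_entry:
  assumes p: "p \<ge> 1" and q: "q \<ge> 1" and i: "i < p + q"
  shows "(\<Sum>j\<in>{0..<p+q}. two_class_eigvec_entry p u v1 v2 i j * w j) =
    (if i < p then u * (w 0 + w p) else v1 * w 0 + v2 * w p) +
    (if i = 0 then - (\<Sum>j\<in>{0..<p} - {0}. w j)
     else if i = p then - (\<Sum>j\<in>{p..<p+q} - {p}. w j) else w i)"
proof -
  let ?e = "two_class_eigvec_entry p u v1 v2"
  have split: "{0..<p+q} = insert 0 (insert p (({0..<p} - {0}) \<union> ({p..<p+q} - {p})))"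
    using p q by auto
  have first: "(\<Sum>j\<in>{0..<p} - {0}. ?e i j * w j) =
      (if i = 0 then - (\<Sum>j\<in>{0..<p} - {0}. w j) else if i < p then w i else 0)"
  proof -
    have "(\<Sum>j\<in>{0..<p} - {0}. ?e i j * w j) =
        (\<Sum>j\<in>{0..<p} - {0}. (if i = j then w j else 0) - (if i = 0 then w j else 0))"
      by (rule sum.cong) (auto simp: two_class_eigvec_entry_def)
    then show ?thesis by (auto simp: sum_subtractf)
  qed
  have second: "(\<Sum>j\<in>{p..<p+q} - {p}. ?e i j * w j) =
      (if i = p then - (\<Sum>j\<in>{p..<p+q} - {p}. w j) else if p < i then w i else 0)"
  proof -
    have "(\<Sum>j\<in>{p..<p+q} - {p}. ?e i j * w j) =
        (\<Sum>j\<in>{p..<p+q} - {p}. (if i = j then w j else 0) - (if i = p then w j else 0))"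
      by (rule sum.cong) (auto simp: two_class_eigvec_entry_def)
    then show ?thesis using i by (auto simp: sum_subtractf)
  qed
  have "(\<Sum>j\<in>{0..<p+q}. ?e i j * w j) = ?e i 0 * w 0 + ?e i p * w p +
      (\<Sum>j\<in>{0..<p} - {0}. ?e i j * w j) + (\<Sum>j\<in>{p..<p+q} - {p}. ?e i j * w j)"
    unfolding split using p by (simp add: add.assoc) (rule sum.union_disjoint, auto)
  then show ?thesis
    unfolding first second using p i by (auto simp: two_class_eigvec_entry_def algebra_simps)
qed

text \<open>Summing the coordinates of \<open>P w = 0\<close> over each class cancels the contributions of the
  columns \<open>e\<^sub>j - e\<^sub>0\<close> and \<open>e\<^sub>j - e\<^sub>p\<close> and leaves two equations for \<open>w\<^sub>0\<close> and \<open>w\<^sub>p\<close>.\<close>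
lemma two_class_eigvec_mat_kernel:
  assumes p: "p \<ge> 1" and q: "q \<ge> 1" and u: "u \<noteq> 0" and v: "v1 \<noteq> v2"
    and zero: "\<And>i. i < p + q \<Longrightarrow> (\<Sum>j\<in>{0..<p+q}. two_class_eigvec_entry p u v1 v2 i j * w j) = 0"
    and i: "i < p + q"
  shows "w i = (0 :: real)"
proof -
  define g where "g i = (if i < p then u * (w 0 + w p) else v1 * w 0 + v2 * w p)" for i
  define corr where "corr i = (if i = 0 then - (\<Sum>j\<in>{0..<p} - {0}. w j)
    else if i = p then - (\<Sum>j\<in>{p..<p+q} - {p}. w j) else w i)" for i
  have row: "g i + corr i = 0" if "i < p + q" for i
    using zero[OF that] sum_two_class_eigvec_entry[OF p q that] unfolding g_def corr_def by simp
  have "real p * (u * (w 0 + w p)) =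
      (\<Sum>i\<in>{0..<p}. u * (w 0 + w p) + (if i = 0 then - (\<Sum>j\<in>{0..<p} - {0}. w j) else w i))"
    using p by (simp add: sum_const_plus_cancelling)
  also have "\<dots> = (\<Sum>i\<in>{0..<p}. g i + corr i)"
    by (intro sum.cong) (auto simp: g_def corr_def)
  also have "\<dots> = 0" using row by (intro sum.neutral) auto
  finally have w0p: "w p = - w 0" using p u by simp
  have "real q * (v1 * w 0 + v2 * w p) = (\<Sum>i\<in>{p..<p+q}. (v1 * w 0 + v2 * w p) +
      (if i = p then - (\<Sum>j\<in>{p..<p+q} - {p}. w j) else w i))"
    using q by (subst sum_const_plus_cancelling) auto
  also have "\<dots> = (\<Sum>i\<in>{p..<p+q}. g i + corr i)"
    using p by (intro sum.cong) (auto simp: g_def corr_def)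
  also have "\<dots> = 0" using row by (intro sum.neutral) auto
  finally have "v1 * w 0 + v2 * w p = 0" using q by simp
  then have "(v1 - v2) * w 0 = 0" using w0p by (simp add: algebra_simps)
  then have "w 0 = 0" "w p = 0" using v w0p by simp_all
  moreover have "w i = 0" if "i < p + q" "i \<noteq> 0" "i \<noteq> p" for i
  proof -
    have "g i = 0" using \<open>w 0 = 0\<close> \<open>w p = 0\<close> by (simp add: g_def)
    moreover have "corr i = w i" using that by (simp add: corr_def)
    ultimately show ?thesis using row[OF that(1)] by simp
  qed
  ultimately show ?thesis using i by (cases "i = 0 \<or> i = p") auto
qed

lemma det_two_class_eigvec_mat:
  assumes "p \<ge> 1" "q \<ge> 1" "u \<noteq> 0" "v1 \<noteq> v2"
  shows "det (two_class_eigvec_mat p q u v1 v2) \<noteq> 0"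
proof
  let ?P = "two_class_eigvec_mat p q u v1 v2"
  assume "det ?P = 0"
  then obtain x where x: "x \<in> carrier_vec (p + q)" "x \<noteq> 0\<^sub>v (p + q)" "?P *\<^sub>v x = 0\<^sub>v (p + q)"
    using det_0_iff_vec_prod_zero_field[of ?P "p + q"] by (auto simp: two_class_eigvec_mat_def)
  have "(\<Sum>j\<in>{0..<p+q}. two_class_eigvec_entry p u v1 v2 i j * x $ j) = 0" if "i < p + q" for i
    using arg_cong[OF x(3), of "\<lambda>y. y $ i"] that x(1)
    by (simp add: two_class_eigvec_mat_def scalar_prod_def)
  then have "x $ i = 0" if "i < p + q" for i
    using two_class_eigvec_mat_kernel[OF assms, of "\<lambda>j. x $ j"] that by blast
  then have "x = 0\<^sub>v (p + q)" using x(1) by (intro eq_vecI) auto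
  with x(2) show False ..
qed

lemma char_poly_two_class_mat:
  assumes p: "p \<ge> 1" and q: "q \<ge> 1" and c: "c \<noteq> 0"
    and t1: "two_class_quadratic p q a b c t1 = 0" and t2: "two_class_quadratic p q a b c t2 = 0"
    and "t1 \<noteq> t2"
  shows "char_poly (two_class_mat p q a b c) =
    (\<Prod>r\<leftarrow>map (two_class_eigvals p a b t1 t2) [0..<p+q]. [:-r, 1:])"
proof -
  let ?S = "two_class_mat p q a b c"
  let ?P = "two_class_eigvec_mat p q (c * real q) (t1 - (real p - 1) * a) (t2 - (real p - 1) * a)"
  let ?D = "mat_diag (p + q) (two_class_eigvals p a b t1 t2)"
  have carrier: "?S \<in> carrier_mat (p + q) (p + q)" "?P \<in> carrier_mat (p + q) (p + q)"
    by (simp_all add: two_class_mat_def two_class_eigvec_mat_def)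
  have "det ?P \<noteq> 0" using assms by (intro det_two_class_eigvec_mat) auto
  then obtain Q
    where Q: "Q \<in> carrier_mat (p + q) (p + q)" "?P * Q = 1\<^sub>m (p + q)" "Q * ?P = 1\<^sub>m (p + q)"
    using det_non_zero_imp_unit[OF carrier(2), of "()"] unfolding Units_def
    by (auto simp: ring_mat_simps)
  have "?S = ?S * (?P * Q)" using carrier(1) by (simp add: Q(2))
  also have "\<dots> = ?S * ?P * Q" using carrier Q(1) by simp
  also have "\<dots> = ?P * ?D * Q" by (simp add: two_class_mat_eigvecs[OF p t1 t2])
  finally have "similar_mat ?S ?D" using carrier Q by (intro similar_matI) auto
  then have "char_poly ?S = char_poly ?D" by (rule char_poly_similar)
  also have "\<dots> = (\<Prod>r\<leftarrow>diag_mat ?D. [:-r, 1:])"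
    by (rule char_poly_upper_triangular[of _ "p + q"]) (auto simp: upper_triangular_def mat_diag_def)
  also have "diag_mat ?D = map (two_class_eigvals p a b t1 t2) [0..<p+q]"
    by (rule nth_equalityI) (auto simp: diag_mat_def mat_diag_def)
  finally show ?thesis .
qed

lemma sum_abs_two_class_eigvals:
  assumes p: "p \<ge> 1" and q: "q \<ge> 1"
  shows "(\<Sum>r\<leftarrow>map (two_class_eigvals p a b t1 t2) [0..<p+q]. \<bar>r\<bar>) =
    \<bar>t1\<bar> + \<bar>t2\<bar> + (real p - 1) * \<bar>a\<bar> + (real q - 1) * \<bar>b\<bar>"
proof -
  let ?f = "\<lambda>j. \<bar>two_class_eigvals p a b t1 t2 j\<bar>"
  have split: "{0..<p+q} = insert 0 (insert p (({0..<p} - {0}) \<union> ({p..<p+q} - {p})))"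
    using p q by auto
  have "(\<Sum>r\<leftarrow>map (two_class_eigvals p a b t1 t2) [0..<p+q]. \<bar>r\<bar>) = (\<Sum>j\<in>{0..<p+q}. ?f j)"
    by (simp add: sum_list_distinct_conv_sum_set comp_def)
  also have "\<dots> = ?f 0 + ?f p + (\<Sum>j\<in>{0..<p} - {0}. ?f j) + (\<Sum>j\<in>{p..<p+q} - {p}. ?f j)"
    unfolding split using p by (simp add: add.assoc) (rule sum.union_disjoint, auto)
  also have "(\<Sum>j\<in>{0..<p} - {0}. ?f j) = (\<Sum>j\<in>{0..<p} - {0}. \<bar>a\<bar>)"
    by (rule sum.cong) (auto simp: two_class_eigvals_def)
  also have "(\<Sum>j\<in>{p..<p+q} - {p}. ?f j) = (\<Sum>j\<in>{p..<p+q} - {p}. \<bar>b\<bar>)"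
    by (rule sum.cong) (auto simp: two_class_eigvals_def)
  also have "?f 0 + ?f p + (\<Sum>j\<in>{0..<p} - {0}. \<bar>a\<bar>) + (\<Sum>j\<in>{p..<p+q} - {p}. \<bar>b\<bar>) =
      \<bar>t1\<bar> + \<bar>t2\<bar> + (real p - 1) * \<bar>a\<bar> + (real q - 1) * \<bar>b\<bar>"
    using p q by (simp add: two_class_eigvals_def)
  finally show ?thesis .
qed

definition two_class_energy :: "nat \<Rightarrow> nat \<Rightarrow> real \<Rightarrow> real \<Rightarrow> real \<Rightarrow> real" where
  "two_class_energy p q a b c = (real p - 1) * \<bar>a\<bar> + (real q - 1) * \<bar>b\<bar>
     + sqrt (((real p - 1) * a - (real q - 1) * b)\<^sup>2 + 4 * c\<^sup>2 * real p * real q)"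

text \<open>The hypothesis makes the two class eigenvalues of opposite signs, so their absolute
  values add up to the square root of the discriminant.\<close>
lemma abs_root_sum_char_poly_two_class_mat:
  assumes p: "p \<ge> 1" and q: "q \<ge> 1" and c: "c \<noteq> 0"
    and indefinite: "(real p - 1) * a * ((real q - 1) * b) < c\<^sup>2 * real p * real q"
  shows "abs_root_sum (char_poly (two_class_mat p q a b c)) = two_class_energy p q a b c"
proof -
  define A where "A = (real p - 1) * a"
  define B where "B = (real q - 1) * b"
  define r where "r = sqrt ((A - B)\<^sup>2 + 4 * c\<^sup>2 * real p * real q)"
  define t1 where "t1 = (A + B + r) / 2"
  define t2 where "t2 = (A + B - r) / 2"
  have "4 * c\<^sup>2 * real p * real q > 0" using c p q by simp
  then have r_pos: "r > 0" and r_sq: "r\<^sup>2 = (A - B)\<^sup>2 + 4 * c\<^sup>2 * real p * real q"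
    unfolding r_def by (simp_all add: add_nonneg_pos)
  have roots: "two_class_quadratic p q a b c t1 = 0" "two_class_quadratic p q a b c t2 = 0"
    unfolding two_class_quadratic_def t1_def t2_def A_def[symmetric] B_def[symmetric]
    using r_sq by (simp_all add: field_simps power2_eq_square)
  have "t1 * t2 = A * B - c\<^sup>2 * real p * real q"
    unfolding t1_def t2_def using r_sq by (simp add: field_simps power2_eq_square)
  then have "t1 * t2 < 0" using indefinite unfolding A_def B_def by simp
  moreover have "t2 < t1" using r_pos unfolding t1_def t2_def by simp
  ultimately have "t2 < 0" "0 < t1" by (auto simp: mult_less_0_iff)
  then have abs_sum: "\<bar>t1\<bar> + \<bar>t2\<bar> = r" unfolding t1_def t2_def by (simp add: field_simps)
  from \<open>t2 < t1\<close> have "t1 \<noteq> t2" by simp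
  have "abs_root_sum (char_poly (two_class_mat p q a b c)) =
      \<bar>t1\<bar> + \<bar>t2\<bar> + (real p - 1) * \<bar>a\<bar> + (real q - 1) * \<bar>b\<bar>"
    unfolding char_poly_two_class_mat[OF p q c roots \<open>t1 \<noteq> t2\<close>] abs_root_sum_prod_linear_factors
    by (rule sum_abs_two_class_eigvals[OF p q])
  also have "\<dots> = two_class_energy p q a b c"
    unfolding abs_sum two_class_energy_def r_def A_def B_def by simp
  finally show ?thesis .
qed

section \<open>Relabelling and strong deletion\<close>

definition hrelabel :: "(nat \<Rightarrow> nat) \<Rightarrow> hypergraph \<Rightarrow> hypergraph" where
  "hrelabel f H = (f ` hverts H, (`) f ` hedges H)"

lemma sorted_list_of_set_image_strict_mono:
  assumes "strict_mono f" "finite A"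
  shows "sorted_list_of_set (f ` A) = map f (sorted_list_of_set A)"
proof -
  have "sorted_wrt (<) (sorted_list_of_set A)" by simp
  then have "sorted_wrt (<) (map f (sorted_list_of_set A))"
    unfolding sorted_wrt_map
    by (rule sorted_wrt_mono_rel[rotated]) (use assms(1) in \<open>simp add: strict_mono_less\<close>)
  moreover have "inj_on f A" using assms(1) strict_mono_imp_inj_on by (blast intro: inj_on_subset)
  ultimately show ?thesis
    using assms(2) by (subst sorted_list_of_set_unique[symmetric]) (auto simp: card_image)
qed

lemma codegree_hrelabel:
  assumes "inj f"
  shows "codegree (hrelabel f H) (f x) (f y) = codegree H x y"
proof -
  have "{e \<in> hedges (hrelabel f H). f x \<in> e \<and> f y \<in> e} = (`) f ` {e \<in> hedges H. x \<in> e \<and> y \<in> e}"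
    unfolding hrelabel_def hedges_def using inj_image_mem_iff[OF assms] by auto
  moreover have "inj ((`) f)" using assms by (simp add: inj_on_image)
  ultimately show ?thesis
    unfolding codegree_def by (simp add: card_image inj_on_subset[of _ UNIV])
qed

lemma seidel_matrix_hrelabel:
  assumes "strict_mono f" "finite (hverts H)"
  shows "seidel_matrix (hrelabel f H) = seidel_matrix H"
proof -
  have verts: "hverts (hrelabel f H) = f ` hverts H" by (simp add: hrelabel_def hverts_def)
  have "inj f" using assms(1) by (rule strict_mono_imp_inj_on)
  then show ?thesis
    unfolding seidel_matrix_def Let_def verts sorted_list_of_set_image_strict_mono[OF assms]
    by (intro cong_mat) (simp_all add: codegree_hrelabel)
qed

definition skip :: "nat \<Rightarrow> nat \<Rightarrow> nat" where
  "skip v i = (if i < v then i else Suc i)"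

lemma strict_mono_skip: "strict_mono (skip v)"
  by (rule strict_monoI) (auto simp: skip_def)

lemma bij_betw_skip:
  assumes "v \<le> N"
  shows "bij_betw (skip v) {0..<N} ({0..<Suc N} - {v})"
proof (rule bij_betw_imageI)
  show "inj_on (skip v) {0..<N}" using strict_mono_skip strict_mono_imp_inj_on inj_on_subset by blast
  have "j \<in> skip v ` {0..<N}" if "j < Suc N" "j \<noteq> v" for j
  proof (rule rev_image_eqI)
    show "(if j < v then j else j - 1) \<in> {0..<N}" and "j = skip v (if j < v then j else j - 1)"
      using that assms by (auto simp: skip_def)
  qed
  moreover have "skip v ` {0..<N} \<subseteq> {0..<Suc N} - {v}"
    using assms by (auto simp: skip_def)
  ultimately show "skip v ` {0..<N} = {0..<Suc N} - {v}" by (intro subset_antisym subsetI) auto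
qed

lemma Collect_subsets_bij_betw:
  assumes "bij_betw f A B"
  shows "{e. e \<subseteq> B \<and> P e} = (`) f ` {e. e \<subseteq> A \<and> P (f ` e)}"
proof (intro equalityI subsetI)
  fix e assume e: "e \<in> {e. e \<subseteq> B \<and> P e}"
  have surj: "f ` A = B" using assms by (rule bij_betw_imp_surj_on)
  have cancel: "e = f ` inv_into A f ` e" using e surj by (simp add: image_inv_into_cancel)
  show "e \<in> (`) f ` {e. e \<subseteq> A \<and> P (f ` e)}"
  proof (rule image_eqI[where f = "(`) f", OF cancel])
    show "inv_into A f ` e \<in> {e. e \<subseteq> A \<and> P (f ` e)}"
      using e surj by (auto intro: inv_into_into simp flip: cancel)
  qed
qed (use assms in \<open>auto dest: bij_betw_imp_surj_on\<close>)

lemma strong_delete_complete_bip3: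
  assumes "v < m + n" and "Suc (m' + n') = m + n"
    and sides: "\<And>i. i < m' + n' \<Longrightarrow> skip v i < m \<longleftrightarrow> i < m'"
  shows "strong_delete (complete_bip3 m n) v = hrelabel (skip v) (complete_bip3 m' n')"
proof -
  let ?A = "{0..<m' + n'}" and ?B = "{0..<m + n} - {v}"
  have bij: "bij_betw (skip v) ?A ?B" using assms(1,2) bij_betw_skip[of v "m' + n'"] by simp
  have meets: "skip v ` e \<inter> {0..<m} \<noteq> {} \<longleftrightarrow> e \<inter> {0..<m'} \<noteq> {}"
    "skip v ` e \<inter> {m..<m + n} \<noteq> {} \<longleftrightarrow> e \<inter> {m'..<m' + n'} \<noteq> {}"
    if "e \<subseteq> ?A" for e
  proof -
    have in_range: "i < m' + n'" "skip v i < m + n" if "i \<in> e" for i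
      using that \<open>e \<subseteq> ?A\<close> bij_betw_apply[OF bij] by auto
    have "(\<exists>i\<in>e. skip v i < m) \<longleftrightarrow> (\<exists>i\<in>e. i < m')"
      "(\<exists>i\<in>e. m \<le> skip v i) \<longleftrightarrow> (\<exists>i\<in>e. m' \<le> i)"
      using sides in_range(1) by (meson not_less)+
    moreover have "e \<inter> {0..<m'} \<noteq> {} \<longleftrightarrow> (\<exists>i\<in>e. i < m')"
      "e \<inter> {m'..<m' + n'} \<noteq> {} \<longleftrightarrow> (\<exists>i\<in>e. m' \<le> i)"
      "skip v ` e \<inter> {0..<m} \<noteq> {} \<longleftrightarrow> (\<exists>i\<in>e. skip v i < m)"
      "skip v ` e \<inter> {m..<m + n} \<noteq> {} \<longleftrightarrow> (\<exists>i\<in>e. m \<le> skip v i)"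
      using in_range by auto
    ultimately show "skip v ` e \<inter> {0..<m} \<noteq> {} \<longleftrightarrow> e \<inter> {0..<m'} \<noteq> {}"
      "skip v ` e \<inter> {m..<m + n} \<noteq> {} \<longleftrightarrow> e \<inter> {m'..<m' + n'} \<noteq> {}"
      by simp_all
  qed
  have card: "card (skip v ` e) = card e" if "e \<subseteq> ?A" for e
    using that bij by (meson bij_betw_imp_inj_on card_image inj_on_subset)
  have "hedges (strong_delete (complete_bip3 m n) v) =
      {e. e \<subseteq> ?B \<and> card e = 3 \<and> e \<inter> {0..<m} \<noteq> {} \<and> e \<inter> {m..<m + n} \<noteq> {}}"
    by (auto simp: strong_delete_def complete_bip3_def hedges_def)
  also have "\<dots> = (`) (skip v) ` hedges (complete_bip3 m' n')"
    unfolding Collect_subsets_bij_betw[OF bij] complete_bip3_def hedges_def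
    by (simp cong: conj_cong add: card meets)
  finally show ?thesis
    using bij_betw_imp_surj_on[OF bij]
    by (simp add: strong_delete_def hrelabel_def hverts_def hedges_def complete_bip3_def)
qed

section \<open>The complete 3-uniform bipartite hypergraph\<close>

lemma card_3_subsets_through:
  assumes "x \<noteq> y" "x \<in> V" "y \<in> V"
  shows "card {e. e \<subseteq> V \<and> card e = 3 \<and> x \<in> e \<and> y \<in> e \<and> P e} =
    card {k \<in> V - {x, y}. P {x, y, k}}"
proof -
  have "{e. e \<subseteq> V \<and> card e = 3 \<and> x \<in> e \<and> y \<in> e \<and> P e} =
      (\<lambda>k. {x, y, k}) ` {k \<in> V - {x, y}. P {x, y, k}}"
  proof (intro equalityI subsetI)
    fix e assume e: "e \<in> {e. e \<subseteq> V \<and> card e = 3 \<and> x \<in> e \<and> y \<in> e \<and> P e}"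
    then have "card (e - {x, y}) = 1"
      using assms(1) by (auto simp: card_Diff_subset intro: card_ge_0_finite)
    then obtain k where k: "e - {x, y} = {k}" by (auto simp: card_Suc_eq)
    then have "e = {x, y, k}" using e by auto
    then show "e \<in> (\<lambda>k. {x, y, k}) ` {k \<in> V - {x, y}. P {x, y, k}}" using e k by auto
  qed (use assms in \<open>auto simp: card_insert_if\<close>)
  moreover have "inj_on (\<lambda>k. {x, y, k}) {k \<in> V - {x, y}. P {x, y, k}}"
    by (auto simp: inj_on_def insert_eq_iff)
  ultimately show ?thesis by (simp add: card_image)
qed

lemma codegree_complete_bip3:
  assumes "x \<noteq> y" "x < m + n" "y < m + n"
  shows "codegree (complete_bip3 m n) x y =
    (if x < m \<and> y < m then n else if m \<le> x \<and> m \<le> y then m else m + n - 2)"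
proof -
  let ?meets = "\<lambda>e. e \<inter> {0..<m} \<noteq> {} \<and> e \<inter> {m..<m + n} \<noteq> {}"
  have "{e \<in> hedges (complete_bip3 m n). x \<in> e \<and> y \<in> e} =
      {e. e \<subseteq> {0..<m + n} \<and> card e = 3 \<and> x \<in> e \<and> y \<in> e \<and> ?meets e}"
    by (auto simp: hedges_def complete_bip3_def)
  then have "codegree (complete_bip3 m n) x y = card {k \<in> {0..<m + n} - {x, y}. ?meets {x, y, k}}"
    unfolding codegree_def using assms by (simp add: card_3_subsets_through)
  also have "{k \<in> {0..<m + n} - {x, y}. ?meets {x, y, k}} =
      (if x < m \<and> y < m then {m..<m + n} else if m \<le> x \<and> m \<le> y then {0..<m} else {0..<m + n} - {x, y})"
    using assms by auto
  finally show ?thesis using assms by (simp add: card_Diff_subset numeral_2_eq_2)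
qed

lemma seidel_matrix_complete_bip3:
  "seidel_matrix (complete_bip3 m n) =
    two_class_mat m n (1 - 2 * real n) (1 - 2 * real m) (1 - 2 * real (m + n - 2))"
proof -
  have verts: "sorted_list_of_set (hverts (complete_bip3 m n)) = [0..<m + n]"
    by (simp add: hverts_def complete_bip3_def)
  show ?thesis
    unfolding seidel_matrix_def Let_def verts two_class_mat_def
    by (intro cong_mat) (auto simp: codegree_complete_bip3 two_class_entry_def)
qed

lemma seidel_energy_strong_delete_complete_bip3:
  assumes "v < m + n"
  shows "seidel_energy (strong_delete (complete_bip3 m n) v) =
    (if v < m then seidel_energy (complete_bip3 (m - 1) n)
     else seidel_energy (complete_bip3 m (n - 1)))"
proof -
  have "strong_delete (complete_bip3 m n) v =
      hrelabel (skip v) (if v < m then complete_bip3 (m - 1) n else complete_bip3 m (n - 1))"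
    using assms
    by (cases "v < m") (auto intro!: strong_delete_complete_bip3 simp: skip_def split: if_split_asm)
  moreover have "finite (hverts (complete_bip3 m' n'))" for m' n'
    by (simp add: hverts_def complete_bip3_def)
  ultimately show ?thesis
    unfolding seidel_energy_eq_abs_root_sum by (simp add: seidel_matrix_hrelabel strict_mono_skip)
qed

definition complete_bip3_energy :: "nat \<Rightarrow> nat \<Rightarrow> real" where
  "complete_bip3_energy m n = (real m - 1) * (2 * real n - 1) + (real n - 1) * (2 * real m - 1)
     + sqrt ((real m - real n)\<^sup>2 + 4 * real m * real n * (2 * real m + 2 * real n - 5)\<^sup>2)"

lemma complete_bip3_energy_commute: "complete_bip3_energy m n = complete_bip3_energy n m"
  unfolding complete_bip3_energy_def by (simp add: power2_commute algebra_simps)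

lemma seidel_complete_bip3_indefinite:
  assumes m: "m \<ge> 2" and n: "n \<ge> 2"
  shows "(real m - 1) * (1 - 2 * real n) * ((real n - 1) * (1 - 2 * real m))
    < (5 - 2 * real m - 2 * real n)\<^sup>2 * real m * real n"
proof -
  obtain s t where st: "m = s + 2" "n = t + 2" using m n by (metis le_add_diff_inverse2)
  have "(5 - 2 * real m - 2 * real n)\<^sup>2 * real m * real n
      - (real m - 1) * (1 - 2 * real n) * ((real n - 1) * (1 - 2 * real m))
    = real (27 + 51*t + 34*t^2 + 8*t^3 + 51*s + 64*s*t + 26*s*t^2 + 4*s*t^3
        + 34*s^2 + 26*s^2*t + 4*s^2*t^2 + 8*s^3 + 4*s^3*t)"
    unfolding st by (simp add: algebra_simps power2_eq_square power3_eq_cube)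
  also have "\<dots> > 0" by (rule of_nat_0_less_iff[THEN iffD2]) simp
  finally show ?thesis by simp
qed

lemma seidel_energy_complete_bip3:
  assumes m: "m \<ge> 2" and n: "n \<ge> 2"
  shows "seidel_energy (complete_bip3 m n) = complete_bip3_energy m n"
proof -
  have c: "1 - 2 * real (m + n - 2) = 5 - 2 * real m - 2 * real n"
    using m n by simp
  have "5 - 2 * real m - 2 * real n \<noteq> 0"
  proof
    assume "5 - 2 * real m - 2 * real n = 0"
    then have "real (2 * m + 2 * n) = real (5 :: nat)" by simp
    then show False by (simp only: of_nat_eq_iff) presburger
  qed
  moreover note seidel_complete_bip3_indefinite[OF m n]
  ultimately have "seidel_energy (complete_bip3 m n) =
      two_class_energy m n (1 - 2 * real n) (1 - 2 * real m) (5 - 2 * real m - 2 * real n)"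
    unfolding seidel_energy_eq_abs_root_sum seidel_matrix_complete_bip3 c
    using m n by (intro abs_root_sum_char_poly_two_class_mat) auto
  also have "\<dots> = complete_bip3_energy m n"
    using m n unfolding two_class_energy_def complete_bip3_energy_def
    by (simp add: power2_eq_square algebra_simps)
  finally show ?thesis .
qed

lemma complete_bip3_energy_less_Suc:
  assumes m: "m \<ge> 2" and n: "n \<ge> 2"
  shows "complete_bip3_energy m n < complete_bip3_energy (Suc m) n"
proof -
  define D where
    "D k = (real k - real n)\<^sup>2 + 4 * real k * real n * (2 * real k + 2 * real n - 5)\<^sup>2" for k
  define L where "L k = (real k - 1) * (2 * real n - 1) + (real n - 1) * (2 * real k - 1)" for k
  have energy: "complete_bip3_energy k n = L k + sqrt (D k)" for k
    by (simp add: complete_bip3_energy_def L_def D_def)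
  obtain s t where st: "m = s + 2" "n = t + 2" using m n by (metis le_add_diff_inverse2)
  have "D (Suc m) - D m = real (457 + 514*t + 176*t^2 + 16*t^3 + 418*s + 336*s*t
      + 64*s*t^2 + 96*s^2 + 48*s^2*t)"
    unfolding D_def st by (simp add: algebra_simps power2_eq_square power3_eq_cube)
  also have "\<dots> > 0" by (rule of_nat_0_less_iff[THEN iffD2]) simp
  finally have "sqrt (D m) < sqrt (D (Suc m))" by simp
  moreover have "L m < L (Suc m)" using n by (simp add: L_def algebra_simps)
  ultimately show ?thesis unfolding energy by (intro add_strict_mono)
qed

theorem corollary3p6:
  fixes m n v :: nat
  assumes "m \<ge> 3" and "n \<ge> 3" and "v \<in> hverts (complete_bip3 m n)"
  shows "seidel_energy (complete_bip3 m n) > seidel_energy (strong_delete (complete_bip3 m n) v)"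
proof -
  have v: "v < m + n" using assms(3) by (simp add: hverts_def complete_bip3_def)
  show ?thesis
  proof (cases "v < m")
    case True
    have "seidel_energy (strong_delete (complete_bip3 m n) v) = complete_bip3_energy (m - 1) n"
      using True v assms(1,2)
      by (simp add: seidel_energy_strong_delete_complete_bip3 seidel_energy_complete_bip3)
    also have "\<dots> < complete_bip3_energy (Suc (m - 1)) n"
      using assms(1,2) by (intro complete_bip3_energy_less_Suc) auto
    also have "\<dots> = seidel_energy (complete_bip3 m n)"
      using assms(1,2) by (simp add: seidel_energy_complete_bip3)
    finally show ?thesis .
  next
    case False
    have "seidel_energy (strong_delete (complete_bip3 m n) v) = complete_bip3_energy (n - 1) m"
      using False v assms(1,2)
      by (simp add: seidel_energy_strong_delete_complete_bip3 seidel_energy_complete_bip3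
          complete_bip3_energy_commute)
    also have "\<dots> < complete_bip3_energy (Suc (n - 1)) m"
      using assms(1,2) by (intro complete_bip3_energy_less_Suc) auto
    also have "\<dots> = seidel_energy (complete_bip3 m n)"
      using assms(1,2) by (simp add: seidel_energy_complete_bip3 complete_bip3_energy_commute)
    finally show ?thesis .
  qed
qed

end
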